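(* In the binary-input random coding setting described in the context, with message $1$ transmitted, for any $w'\neq1$ and any $\theta<0$, almost surely $$\lim_{N\to\infty}\frac1N\ln\mathbb E\big\{e^{N\theta\mathsf D(w')}\,\big|\,\underline{\mathsf T}\big\}=\mathbb E\Big[\ln\big(1+e^{\theta|\ln(q^+(\mathsf Y)/q^-(\mathsf Y))|}\big)\Big]-\ln2,$$ where on the right $\mathsf Y$ has density $(q^++q^-)/2$.
   Context: Let $q^+$ and $q^-$ be probability density functions on $\mathbb R$. They are the output densities of a binary-input memoryless channel when the input is $+1$ and $-1$, respectively. Assume: (A1) There exist $M_1>0$, $a>0$ and a polynomial $S_1$ with $q^\pm(y)<S_1(|y|)e^{-a|y|}$ for all $|y|>M_1$. (A2) There exist $M_2>0$ and a polynomial $S_2$ with $|\ln(q^+(y)/q^-(y))|<S_2(|y|)$ for all $|y|>M_2$. (A3) Let $\mathsf X$ be uniform on $\{+1,-1\}$, let $\mathsf Y$ have density $q^{+}$ given $\mathsf X=+1$ and $q^-$ given $\mathsf X=-1$, and let $\mathsf T=\ln(q^+(\mathsf Y)/q^-(\mathsf Y))$. The CDF $\Psi$ of $|\mathsf T|$ on $[0,\infty)$ and its inverse $\Psi^{-1}$ are smooth with finite first, second and third derivatives. Random coding: the codebook has $\lceil e^{NR}\rceil$ codewords $\underline{\mathsf X}(w)=(\mathsf X_1(w),\dots,\mathsf X_N(w))$, with all entries i.i.d. uniform on $\{\pm1\}$. Message $1$ is transmitted: given $\underline{\mathsf X}(1)$, the outputs $\mathsf Y_1,\dots,\mathsf Y_N$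 are independent, with $\mathsf Y_i$ having density $q^{\mathsf X_i(1)}$. Let $\mathsf T_i=\ln(q^+(\mathsf Y_i)/q^-(\mathsf Y_i))$ and $\underline{\mathsf T}=(\mathsf T_1,\dots,\mathsf T_N)$. Let $\mathsf R_i$ be the rank of $|\mathsf T_i|$ among $|\mathsf T_1|,\dots,|\mathsf T_N|$ (rank $1$ is the smallest). Let $\mathrm{sgn}(t)=1$ if $t\ge0$ and $-1$ otherwise. The CDF-ORBGRAND metric is $$\mathsf D(w)=\frac1N\sum_{i=1}^N\Psi^{-1}\Big(\frac{\mathsf R_i}{N+1}\Big)\mathbf 1\big(\mathrm{sgn}(\mathsf T_i)\mathsf X_i(w)<0\big).$$ *)

theory Defs
  imports "HOL-Probability.Probability" "HOL-Computational_Algebra.Polynomial"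
begin

definition is_pdf :: "(real \<Rightarrow> real) \<Rightarrow> bool" where
  "is_pdf q \<longleftrightarrow> q \<in> borel_measurable borel \<and> (\<forall>y. 0 \<le> q y)
      \<and> (\<integral>\<^sup>+ y. ennreal (q y) \<partial>lborel) = 1"

definition llr :: "(real \<Rightarrow> real) \<Rightarrow> (real \<Rightarrow> real) \<Rightarrow> real \<Rightarrow> real" where
  "llr qp qm y = ln (qp y / qm y)"

text \<open>Output distribution for a uniform input: density (q+ + q-)/2.\<close>
definition mix_out :: "(real \<Rightarrow> real) \<Rightarrow> (real \<Rightarrow> real) \<Rightarrow> real measure" where
  "mix_out qp qm = density lborel (\<lambda>y. ennreal ((qp y + qm y) / 2))"

text \<open>CDF of |T| (X uniform, Y | X with density q^X).\<close>
definition Psi :: "(real \<Rightarrow> real) \<Rightarrow> (real \<Rightarrow> real) \<Rightarrow> real \<Rightarrow> real" where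
  "Psi qp qm t = measure (mix_out qp qm) {y. \<bar>llr qp qm y\<bar> \<le> t}"

definition thrice_differentiable_on :: "(real \<Rightarrow> real) \<Rightarrow> real set \<Rightarrow> bool" where
  "thrice_differentiable_on f S \<longleftrightarrow> (\<exists>f1 f2 f3. \<forall>x\<in>S.
      (f has_real_derivative f1 x) (at x) \<and> (f1 has_real_derivative f2 x) (at x)
      \<and> (f2 has_real_derivative f3 x) (at x))"

definition sgnp :: "real \<Rightarrow> real" where
  "sgnp t = (if t \<ge> 0 then 1 else -1)"

text \<open>Rank of |T_i| among |T_1|,...,|T_N| (1 = smallest; ties broken by index).\<close>
definition rank :: "(nat \<Rightarrow> real) \<Rightarrow> nat \<Rightarrow> nat \<Rightarrow> nat" where
  "rank t N i = card {j\<in>{1..N}. \<bar>t j\<bar> < \<bar>t i\<bar> \<or> (\<bar>t j\<bar> = \<bar>t i\<bar> \<and> j \<le> i)}"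

definition orb_metric :: "(real \<Rightarrow> real) \<Rightarrow> nat \<Rightarrow> (nat \<Rightarrow> real) \<Rightarrow> (nat \<Rightarrow> real) \<Rightarrow> real" where
  "orb_metric Psiinv N t x =
     (1 / real N) * (\<Sum>i = 1..N. Psiinv (real (rank t N i) / real (N + 1))
        * (if sgnp (t i) * x i < 0 then 1 else 0))"

definition gen_sigma :: "'a measure \<Rightarrow> (nat \<Rightarrow> 'a \<Rightarrow> real) \<Rightarrow> nat \<Rightarrow> 'a measure" where
  "gen_sigma M T N = vimage_algebra (space M) (\<lambda>\<omega>. restrict (\<lambda>i. T i \<omega>) {1..N})
       (PiM {1..N} (\<lambda>_. borel))"

end

theory Submission
  imports Defs "HOL-Real_Asymp.Real_Asymp"
begin

text \<open>
  Conditionally on the log-likelihood ratios, the entries of a competing codeword are still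
  independent uniform signs, and \<open>exp (N \<theta> D)\<close> factorises over the positions: position \<open>i\<close>
  contributes \<open>exp (\<theta> Psiinv (R\<^sub>i / (N + 1)))\<close> if the sign of \<open>T\<^sub>i\<close> disagrees with the
  codeword entry and \<open>1\<close> otherwise. Hence the conditional expectation is
  \<open>\<Prod>\<^sub>i (1 + exp (\<theta> Psiinv (R\<^sub>i / (N + 1)))) / 2\<close>, and since the ranks permute \<open>{1..N}\<close>
  this is the deterministic \<open>orb_mgf Psiinv \<theta> N\<close>. Its normalised logarithm is a Riemann sum
  of the bounded monotone function \<open>u \<mapsto> ln (1 + exp (\<theta> Psiinv u))\<close> on \<open>(0, 1)\<close>, minus
  \<open>ln 2\<close>, and the quantile transform (\<open>Psiinv\<close> of a uniform variable has the law of \<open>|T|\<close>)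
  identifies the limit with \<open>E ln (1 + exp (\<theta> |T|))\<close>.
\<close>

section \<open>Ranks and the ORBGRAND metric\<close>

definition rank_prec :: "(nat \<Rightarrow> real) \<Rightarrow> nat \<Rightarrow> nat \<Rightarrow> bool" where
  "rank_prec t j i \<longleftrightarrow> \<bar>t j\<bar> < \<bar>t i\<bar> \<or> (\<bar>t j\<bar> = \<bar>t i\<bar> \<and> j \<le> i)"

lemma rank_prec_refl: "rank_prec t i i"
  and rank_prec_trans: "rank_prec t j i \<Longrightarrow> rank_prec t i k \<Longrightarrow> rank_prec t j k"
  and rank_prec_antisym: "rank_prec t j i \<Longrightarrow> rank_prec t i j \<Longrightarrow> i = j"
  and rank_prec_total: "rank_prec t j i \<or> rank_prec t i j"
  unfolding rank_prec_def by auto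

lemma rank_eq_card_rank_prec: "rank t N i = card {j\<in>{1..N}. rank_prec t j i}"
  unfolding rank_def rank_prec_def ..

lemma rank_cong:
  "(\<And>j. j \<in> {1..N} \<Longrightarrow> t j = t' j) \<Longrightarrow> i \<in> {1..N} \<Longrightarrow> rank t N i = rank t' N i"
  unfolding rank_def by (intro arg_cong[where f=card] Collect_cong) auto

lemma rank_strict_mono:
  assumes "i' \<in> {1..N}" "rank_prec t i i'" "i \<noteq> i'"
  shows "rank t N i < rank t N i'"
  unfolding rank_eq_card_rank_prec
proof (rule psubset_card_mono)
  have "{j\<in>{1..N}. rank_prec t j i} \<subseteq> {j\<in>{1..N}. rank_prec t j i'}"
    using assms(2) rank_prec_trans by blast
  moreover have "i' \<in> {j\<in>{1..N}. rank_prec t j i'} - {j\<in>{1..N}. rank_prec t j i}"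
    using assms rank_prec_refl rank_prec_antisym by blast
  ultimately show "{j\<in>{1..N}. rank_prec t j i} \<subset> {j\<in>{1..N}. rank_prec t j i'}"
    by blast
qed simp

lemma rank_in_range:
  assumes i: "i \<in> {1..N}"
  shows "rank t N i \<in> {1..N}"
proof -
  have "{j\<in>{1..N}. rank_prec t j i} \<noteq> {}"
    using i rank_prec_refl by blast
  then have "rank t N i \<noteq> 0"
    unfolding rank_eq_card_rank_prec by simp
  moreover have "rank t N i \<le> N"
    unfolding rank_eq_card_rank_prec
    using card_mono[OF finite_atLeastAtMost, of "{j\<in>{1..N}. rank_prec t j i}" 1 N] by fastforce
  ultimately show ?thesis by simp
qed

lemma bij_betw_rank: "bij_betw (rank t N) {1..N} {1..N}"
proof -
  have inj: "inj_on (rank t N) {1..N}"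
  proof (rule inj_onI, rule ccontr)
    fix i i' assume "i \<in> {1..N}" "i' \<in> {1..N}" "rank t N i = rank t N i'" "i \<noteq> i'"
    then show False
      using rank_prec_total[of t i i'] rank_strict_mono[of i' N t i] rank_strict_mono[of i N t i'] by auto
  qed
  moreover have "rank t N ` {1..N} = {1..N}"
    using inj rank_in_range by (intro card_subset_eq) (auto simp: card_image)
  ultimately show ?thesis
    by (simp add: bij_betw_def)
qed

lemma prod_rank_reindex: "(\<Prod>i\<in>{1..N}. g (rank t N i)) = (\<Prod>k\<in>{1..N}. g k)"
  by (rule prod.reindex_bij_betw[OF bij_betw_rank])

lemma measurable_rank:
  assumes t: "\<And>j. j \<in> {1..N} \<Longrightarrow> (\<lambda>\<omega>. t \<omega> j) \<in> borel_measurable M" and i: "i \<in> {1..N}"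
  shows "(\<lambda>\<omega>. rank (t \<omega>) N i) \<in> M \<rightarrow>\<^sub>M count_space UNIV"
proof -
  have count: "real (rank (t \<omega>) N i) = (\<Sum>j\<in>{1..N}. if rank_prec (t \<omega>) j i then 1 else 0)" for \<omega>
    unfolding rank_eq_card_rank_prec by (simp add: sum.If_cases Int_def conj_commute)
  have real_rank[measurable]: "(\<lambda>\<omega>. real (rank (t \<omega>) N i)) \<in> borel_measurable M"
    unfolding count
  proof (rule borel_measurable_sum)
    fix j assume "j \<in> {1..N}"
    with t i have [measurable]: "(\<lambda>\<omega>. t \<omega> j) \<in> borel_measurable M" "(\<lambda>\<omega>. t \<omega> i) \<in> borel_measurable M"
      by auto
    show "(\<lambda>\<omega>. if rank_prec (t \<omega>) j i then 1 else 0 :: real) \<in> borel_measurable M"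
      unfolding rank_prec_def by measurable
  qed
  have "{\<omega>\<in>space M. real (rank (t \<omega>) N i) = real n} \<in> sets M" for n
    by measurable
  then show ?thesis
    by (auto simp: measurable_count_space_eq2_countable vimage_def Int_def conj_commute)
qed

lemma orb_metric_cong:
  assumes "\<And>i. i \<in> {1..N} \<Longrightarrow> t i = t' i" "\<And>i. i \<in> {1..N} \<Longrightarrow> x i = x' i"
  shows "orb_metric Q N t x = orb_metric Q N t' x'"
  unfolding orb_metric_def using assms rank_cong[of N t t'] by (intro arg_cong[where f="(*) _"] sum.cong) auto

lemma exp_orb_metric:
  "exp (real N * \<theta> * orb_metric Q N t x)
     = (\<Prod>i\<in>{1..N}. exp (\<theta> * Q (real (rank t N i) / real (N + 1)) * (if sgnp (t i) * x i < 0 then 1 else 0)))"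
  by (cases "N = 0") (simp_all add: orb_metric_def exp_sum sum_distrib_left mult.assoc)

lemma measurable_orb_metric:
  assumes t: "\<And>j. j \<in> {1..N} \<Longrightarrow> (\<lambda>\<omega>. t \<omega> j) \<in> borel_measurable M"
    and x: "\<And>j. j \<in> {1..N} \<Longrightarrow> (\<lambda>\<omega>. x \<omega> j) \<in> borel_measurable M"
  shows "(\<lambda>\<omega>. orb_metric Q N (t \<omega>) (x \<omega>)) \<in> borel_measurable M"
  unfolding orb_metric_def
proof (intro borel_measurable_times borel_measurable_const borel_measurable_sum)
  fix i assume i: "i \<in> {1..N}"
  have [measurable]: "(\<lambda>\<omega>. t \<omega> i) \<in> borel_measurable M" "(\<lambda>\<omega>. x \<omega> i) \<in> borel_measurable M"
    using t x i by auto
  show "(\<lambda>\<omega>. Q (real (rank (t \<omega>) N i) / real (N + 1))) \<in> borel_measurable M"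
    by (rule measurable_compose_countable'[OF _ measurable_rank[OF t i]]) simp_all
  show "(\<lambda>\<omega>. if sgnp (t \<omega> i) * x \<omega> i < 0 then 1 else 0 :: real) \<in> borel_measurable M"
    unfolding sgnp_def by measurable
qed

definition orb_mgf :: "(real \<Rightarrow> real) \<Rightarrow> real \<Rightarrow> nat \<Rightarrow> real" where
  "orb_mgf Q \<theta> N = (\<Prod>k\<in>{1..N}. (1 + exp (\<theta> * Q (real k / real (N + 1)))) / 2)"

lemma exp_orb_metric_le: "exp (real N * \<theta> * orb_metric Q N t x) \<le> 2 ^ N * orb_mgf Q \<theta> N"
proof -
  have "exp (real N * \<theta> * orb_metric Q N t x)
      \<le> (\<Prod>i\<in>{1..N}. 1 + exp (\<theta> * Q (real (rank t N i) / real (N + 1))))"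
    unfolding exp_orb_metric by (intro prod_mono) auto
  also have "\<dots> = (\<Prod>k\<in>{1..N}. 1 + exp (\<theta> * Q (real k / real (N + 1))))"
    by (rule prod_rank_reindex)
  also have "\<dots> = 2 ^ N * orb_mgf Q \<theta> N"
    by (simp add: orb_mgf_def prod_dividef)
  finally show ?thesis .
qed

section \<open>Riemann sums of monotone functions\<close>

lemma sum_indicator_grid_Ioc:
  assumes "0 < h"
  shows "(\<Sum>k=1..m. indicator {real k * h - h<..real k * h} u) = (indicator {0<..real m * h} u :: real)"
proof (induction m)
  case (Suc m)
  have split: "indicator {0<..a} u + indicator {a<..a + h} u = (indicator {0<..a + h} u :: real)"
    if "0 \<le> a" for a
    using that assms by (auto simp: indicator_def)
  have "(\<Sum>k=1..Suc m. indicator {real k * h - h<..real k * h} u)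
      = indicator {0<..real m * h} u + (indicator {real m * h<..real m * h + h} u :: real)"
    using Suc.IH by (simp add: algebra_simps)
  also have "\<dots> = indicator {0<..real (Suc m) * h} u"
    using assms by (subst split) (simp_all add: algebra_simps)
  finally show ?case .
qed simp

lemma sum_indicator_grid_Ico:
  assumes "0 < h"
  shows "indicator {0<..<h} u + (\<Sum>k=1..m. indicator {real k * h..<real k * h + h} u)
    = (indicator {0<..<real m * h + h} u :: real)"
proof (induction m)
  case (Suc m)
  have split: "indicator {0<..<a} u + indicator {a..<a + h} u = (indicator {0<..<a + h} u :: real)"
    if "0 < a" for a
    using that assms by (auto simp: indicator_def)
  have "indicator {0<..<h} u + (\<Sum>k=1..Suc m. indicator {real k * h..<real k * h + h} u)
      = indicator {0<..<real m * h + h} u + (indicator {real m * h + h..<real m * h + h + h} u :: real)"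
    using Suc.IH by (simp add: algebra_simps)
  also have "\<dots> = indicator {0<..<real (Suc m) * h + h} u"
    using assms by (subst split) (simp_all add: algebra_simps add_pos_nonneg)
  finally show ?case .
qed simp

lemma integrable_step_function:
  fixes c :: "'k \<Rightarrow> real" and S :: "'k \<Rightarrow> real set"
  assumes "\<And>k. k \<in> K \<Longrightarrow> S k \<in> sets borel" "\<And>k. k \<in> K \<Longrightarrow> bounded (S k)"
  shows "integrable lborel (\<lambda>u. \<Sum>k\<in>K. c k * indicator (S k) u)"
proof (rule Bochner_Integration.integrable_sum)
  fix k assume "k \<in> K"
  then show "integrable lborel (\<lambda>u. c k * indicator (S k) u)"
    using assms emeasure_bounded_finite[of "S k"]
    by (intro integrable_mult_right integrable_real_indicator) auto
qed

lemma integral_step_function: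
  fixes c :: "'k \<Rightarrow> real" and S :: "'k \<Rightarrow> real set"
  assumes "\<And>k. k \<in> K \<Longrightarrow> S k \<in> sets borel" "\<And>k. k \<in> K \<Longrightarrow> bounded (S k)"
  shows "(\<integral>u. (\<Sum>k\<in>K. c k * indicator (S k) u) \<partial>lborel) = (\<Sum>k\<in>K. c k * measure lborel (S k))"
proof -
  have "integrable lborel (\<lambda>u. c k * indicator (S k) u)" if "k \<in> K" for k
    using assms that emeasure_bounded_finite[of "S k"]
    by (intro integrable_mult_right integrable_real_indicator) auto
  then show ?thesis
    by (subst Bochner_Integration.integral_sum) auto
qed

lemma grid_point_bounds:
  assumes h: "h = 1 / real (N + 1)" and k: "k \<in> {1..N}"
  shows "0 < h" "0 \<le> real k * h - h" "real k * h + h \<le> 1"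
proof -
  show h0: "0 < h"
    using h by simp
  have "1 * h \<le> real k * h" "real k * h \<le> real N * h"
    using k h0 by (intro mult_right_mono; simp)+
  moreover have "real N * h + h = 1"
    using h by (simp add: field_simps)
  ultimately show "0 \<le> real k * h - h" "real k * h + h \<le> 1"
    by linarith+
qed

context
  fixes \<phi> :: "real \<Rightarrow> real" and C :: real
  assumes antimono: "antimono_on {0<..<1} \<phi>"
    and bounds: "\<And>u. u \<in> {0<..<1} \<Longrightarrow> 0 \<le> \<phi> u \<and> \<phi> u \<le> C"
    and phi_measurable: "(\<lambda>u. \<phi> u * indicator {0<..<1} u) \<in> borel_measurable lborel"
begin

lemma integrable_antimono_bounded: "integrable lborel (\<lambda>u. \<phi> u * indicator {0<..<1} u)"
proof (rule Bochner_Integration.integrable_bound)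
  show "integrable lborel (\<lambda>u::real. C * indicator {0<..<1} u :: real)"
    using integrable_step_function[of "{()}" "\<lambda>_. {0<..<1}" "\<lambda>_. C"] by simp
  show "AE u in lborel. norm (\<phi> u * indicator {0<..<1} u) \<le> norm (C * indicator {0<..<1} u :: real)"
    using bounds by (intro AE_I2) (force simp: indicator_def)
qed (rule phi_measurable)

lemma lower_step_le_antimono:
  assumes h: "h = 1 / real (N + 1)"
  shows "(\<Sum>k=1..N. \<phi> (real k * h) * indicator {real k * h - h<..real k * h} u) \<le> \<phi> u * indicator {0<..<1} u"
proof -
  have h0: "0 < h"
    using h by simp
  have "(\<Sum>k=1..N. \<phi> (real k * h) * indicator {real k * h - h<..real k * h} u)
      \<le> (\<Sum>k=1..N. \<phi> u * indicator {0<..<1} u * indicator {real k * h - h<..real k * h} u)"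
  proof (intro sum_mono)
    fix k assume k: "k \<in> {1..N}"
    show "\<phi> (real k * h) * indicator {real k * h - h<..real k * h} u
        \<le> \<phi> u * indicator {0<..<1} u * indicator {real k * h - h<..real k * h} u"
    proof (cases "real k * h - h < u \<and> u \<le> real k * h")
      case True
      with grid_point_bounds[OF h k] have "u \<in> {0<..<1}" "real k * h \<in> {0<..<1}" "u \<le> real k * h"
        unfolding greaterThanLessThan_iff by linarith+
      then show ?thesis
        using monotone_onD[OF antimono] by (simp add: indicator_def)
    qed (auto simp: indicator_def)
  qed
  also have "\<dots> = \<phi> u * indicator {0<..<1} u * indicator {0<..real N * h} u"
    by (simp only: sum_distrib_left[symmetric] sum_indicator_grid_Ioc[OF h0])
  also have "\<dots> \<le> \<phi> u * indicator {0<..<1} u"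
    using bounds[of u] by (simp add: indicator_def)
  finally show ?thesis .
qed

lemma antimono_le_upper_step:
  assumes h: "h = 1 / real (N + 1)"
  shows "\<phi> u * indicator {0<..<1} u
    \<le> C * indicator {0<..<h} u + (\<Sum>k=1..N. \<phi> (real k * h) * indicator {real k * h..<real k * h + h} u)"
proof -
  have h0: "0 < h" and "real N * h + h = 1"
    using h by (simp, simp add: field_simps)
  then have cover: "indicator {0<..<1} u
      = indicator {0<..<h} u + (\<Sum>k=1..N. indicator {real k * h..<real k * h + h} u :: real)"
    using sum_indicator_grid_Ico[OF h0, of u N] by simp
  have "\<phi> u * indicator {0<..<1} u = \<phi> u * indicator {0<..<1} u * indicator {0<..<1} u"
    by (simp add: indicator_def)
  also have "\<dots> = \<phi> u * indicator {0<..<1} u * indicator {0<..<h} u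
      + (\<Sum>k=1..N. \<phi> u * indicator {0<..<1} u * indicator {real k * h..<real k * h + h} u)"
    unfolding cover by (simp add: distrib_left sum_distrib_left)
  also have "\<dots> \<le> C * indicator {0<..<h} u
      + (\<Sum>k=1..N. \<phi> (real k * h) * indicator {real k * h..<real k * h + h} u)"
  proof (intro add_mono sum_mono)
    show "\<phi> u * indicator {0<..<1} u * indicator {0<..<h} u \<le> C * indicator {0<..<h} u"
      using bounds[of u] bounds[of "1/2"] by (simp add: indicator_def)
    fix k assume k: "k \<in> {1..N}"
    show "\<phi> u * indicator {0<..<1} u * indicator {real k * h..<real k * h + h} u
        \<le> \<phi> (real k * h) * indicator {real k * h..<real k * h + h} u"
    proof (cases "real k * h \<le> u \<and> u < real k * h + h")
      case True
      with grid_point_bounds[OF h k] have "u \<in> {0<..<1}" "real k * h \<in> {0<..<1}" "real k * h \<le> u"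
        unfolding greaterThanLessThan_iff by linarith+
      then show ?thesis
        using monotone_onD[OF antimono] by (simp add: indicator_def)
    qed (auto simp: indicator_def)
  qed
  finally show ?thesis .
qed

lemma riemann_sum_le_integral_antimono:
  assumes h: "h = 1 / real (N + 1)"
  shows "h * (\<Sum>k=1..N. \<phi> (real k * h)) \<le> (\<integral>u. \<phi> u * indicator {0<..<1} u \<partial>lborel)"
proof -
  have "h * (\<Sum>k=1..N. \<phi> (real k * h))
      = (\<integral>u. (\<Sum>k=1..N. \<phi> (real k * h) * indicator {real k * h - h<..real k * h} u) \<partial>lborel)"
    using h by (subst integral_step_function) (auto simp: sum_distrib_left mult.commute)
  also have "\<dots> \<le> (\<integral>u. \<phi> u * indicator {0<..<1} u \<partial>lborel)"
    by (intro integral_mono integrable_antimono_bounded lower_step_le_antimono[OF h]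
        integrable_step_function) auto
  finally show ?thesis .
qed

lemma integral_le_riemann_sum_antimono:
  assumes h: "h = 1 / real (N + 1)"
  shows "(\<integral>u. \<phi> u * indicator {0<..<1} u \<partial>lborel) \<le> C * h + h * (\<Sum>k=1..N. \<phi> (real k * h))"
proof -
  have h0: "0 < h"
    using h by simp
  have int_C: "integrable lborel (\<lambda>u::real. C * indicator {0<..<h} u :: real)"
    using integrable_step_function[of "{()}" "\<lambda>_. {0<..<h}" "\<lambda>_. C"] by simp
  have int_B: "integrable lborel (\<lambda>u. \<Sum>k=1..N. \<phi> (real k * h) * indicator {real k * h..<real k * h + h} u)"
    by (rule integrable_step_function) auto
  have "(\<integral>u. \<phi> u * indicator {0<..<1} u \<partial>lborel)
      \<le> (\<integral>u. C * indicator {0<..<h} u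
            + (\<Sum>k=1..N. \<phi> (real k * h) * indicator {real k * h..<real k * h + h} u) \<partial>lborel)"
    by (intro integral_mono integrable_antimono_bounded antimono_le_upper_step[OF h]
        Bochner_Integration.integrable_add int_B int_C)
  also have "\<dots> = C * h + h * (\<Sum>k=1..N. \<phi> (real k * h))"
    using h0 by (subst Bochner_Integration.integral_add[OF int_C int_B], subst integral_step_function)
      (auto simp: sum_distrib_left mult.commute)
  finally show ?thesis .
qed

lemma riemann_sum_tendsto_antimono:
  "(\<lambda>N. (\<Sum>k=1..N. \<phi> (real k / real (N + 1))) / real N) \<longlonglongrightarrow> (\<integral>u. \<phi> u * indicator {0<..<1} u \<partial>lborel)"
proof -
  define I where "I = (\<integral>u. \<phi> u * indicator {0<..<1} u \<partial>lborel)"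
  define h where "h N = 1 / real (N + 1)" for N :: nat
  define S where "S N = h N * (\<Sum>k=1..N. \<phi> (real k * h N))" for N
  have "S N \<le> I" "I - C * h N \<le> S N" for N
    using riemann_sum_le_integral_antimono[of "h N" N] integral_le_riemann_sum_antimono[of "h N" N]
    unfolding S_def I_def h_def by simp_all
  moreover have "(\<lambda>N. I - C * h N) \<longlonglongrightarrow> I"
    unfolding h_def by real_asymp
  ultimately have "S \<longlonglongrightarrow> I"
    by (intro tendsto_sandwich[of "\<lambda>N. I - C * h N" S _ "\<lambda>_. I"]) auto
  moreover have "(\<lambda>N. real (N + 1) / real N) \<longlonglongrightarrow> 1"
    by real_asymp
  ultimately have "(\<lambda>N. S N * (real (N + 1) / real N)) \<longlonglongrightarrow> I * 1"
    by (rule tendsto_mult)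
  moreover have "\<forall>\<^sub>F N in sequentially.
      S N * (real (N + 1) / real N) = (\<Sum>k=1..N. \<phi> (real k / real (N + 1))) / real N"
    by (intro eventually_sequentiallyI[of 1]) (simp add: S_def h_def)
  ultimately show ?thesis
    unfolding I_def by (auto intro: Lim_transform_eventually)
qed

end

lemma one_plus_exp_neq_zero [simp]: "1 + exp x \<noteq> (0::real)"
  using exp_gt_zero[of x] by linarith

lemma tendsto_ln_orb_mgf:
  assumes \<theta>: "\<theta> < 0" and Q_pos: "\<And>u. u \<in> {0<..<1} \<Longrightarrow> 0 < Q u"
    and Q_mono: "mono_on {0<..<1} Q" and Q_cont: "continuous_on {0<..<1} Q"
  shows "(\<lambda>N. ln (orb_mgf Q \<theta> N) / real N)
    \<longlonglongrightarrow> (\<integral>u. ln (1 + exp (\<theta> * Q u)) * indicator {0<..<1} u \<partial>lborel) - ln 2"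
proof -
  define \<phi> where "\<phi> u = ln (1 + exp (\<theta> * Q u))" for u
  have "antimono_on {0<..<1} \<phi>"
    using Q_mono \<theta> by (intro monotone_onI) (auto simp: \<phi>_def mono_onD mult_left_mono_neg add_pos_pos)
  moreover have "0 \<le> \<phi> u \<and> \<phi> u \<le> ln 2" if "u \<in> {0<..<1}" for u
    using mult_neg_pos[OF \<theta> Q_pos[OF that]] by (simp add: \<phi>_def add_pos_pos)
  moreover have "(\<lambda>u. \<phi> u * indicator {0<..<1} u) \<in> borel_measurable lborel"
  proof -
    have "continuous_on {0<..<1} \<phi>"
      unfolding \<phi>_def
      by (intro continuous_intros Q_cont) simp
    then have "(\<lambda>u. indicator {0<..<1} u *\<^sub>R \<phi> u) \<in> borel_measurable borel"
      by (intro borel_measurable_continuous_on_indicator) auto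
    then show ?thesis
      by (simp add: mult.commute)
  qed
  ultimately have "(\<lambda>N. (\<Sum>k=1..N. \<phi> (real k / real (N + 1))) / real N - ln 2)
      \<longlonglongrightarrow> (\<integral>u. \<phi> u * indicator {0<..<1} u \<partial>lborel) - ln 2"
    by (intro tendsto_diff riemann_sum_tendsto_antimono tendsto_const)
  moreover have "\<forall>\<^sub>F N in sequentially.
      (\<Sum>k=1..N. \<phi> (real k / real (N + 1))) / real N - ln 2 = ln (orb_mgf Q \<theta> N) / real N"
  proof (rule eventually_sequentiallyI)
    fix N :: nat assume "1 \<le> N"
    have "ln (orb_mgf Q \<theta> N) = (\<Sum>k=1..N. \<phi> (real k / real (N + 1)) - ln 2)"
      unfolding orb_mgf_def \<phi>_def by (subst ln_prod) (auto simp: add_pos_pos ln_div)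
    with \<open>1 \<le> N\<close> show "(\<Sum>k=1..N. \<phi> (real k / real (N + 1))) / real N - ln 2 = ln (orb_mgf Q \<theta> N) / real N"
      by (simp add: sum_subtractf diff_divide_distrib)
  qed
  ultimately show ?thesis
    unfolding \<phi>_def by (rule Lim_transform_eventually)
qed

section \<open>The quantile transform\<close>

lemma (in real_distribution) quantile_le_iff:
  fixes Q :: "real \<Rightarrow> real"
  assumes Q_pos: "\<And>u. u \<in> {0<..<1} \<Longrightarrow> 0 < Q u"
    and cdf_Q: "\<And>u. u \<in> {0<..<1} \<Longrightarrow> cdf M (Q u) = u"
    and Q_cdf: "\<And>t. 0 < t \<Longrightarrow> Q (cdf M t) = t"
    and u: "u \<in> {0<..<1}"
  shows "Q u \<le> x \<longleftrightarrow> u \<le> cdf M x"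
proof
  assume "Q u \<le> x"
  then show "u \<le> cdf M x"
    using cdf_nondecreasing cdf_Q[OF u] by metis
next
  assume ux: "u \<le> cdf M x"
  have "cdf M 0 = 0"
  proof (rule ccontr)
    assume "cdf M 0 \<noteq> 0"
    then have v: "cdf M 0 / 2 \<in> {0<..<1}"
      using cdf_nonneg[of 0] cdf_bounded_prob[of 0] by auto
    then have "cdf M 0 \<le> cdf M (Q (cdf M 0 / 2))"
      using Q_pos by (intro cdf_nondecreasing less_imp_le) 
    then show False
      using cdf_Q[OF v] v by simp
  qed
  then have x: "0 < x"
    using ux u cdf_nondecreasing[of x 0] by (cases "0 < x") auto
  show "Q u \<le> x"
  proof (rule ccontr)
    assume "\<not> Q u \<le> x"
    then have "cdf M x \<le> u"
      using cdf_nondecreasing[of x "Q u"] cdf_Q[OF u] by simp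
    then have "Q u = Q (cdf M x)"
      using ux by simp
    with \<open>\<not> Q u \<le> x\<close> show False
      using Q_cdf[OF x] by simp
  qed
qed

lemma (in real_distribution) integral_eq_integral_quantile:
  fixes Q :: "real \<Rightarrow> real" and g :: "real \<Rightarrow> real"
  assumes Q_le_iff: "\<And>u x. u \<in> {0<..<1} \<Longrightarrow> Q u \<le> x \<longleftrightarrow> u \<le> cdf M x"
    and g[measurable]: "g \<in> borel_measurable borel"
  shows "(\<integral>x. g x \<partial>M) = (\<integral>u. g (Q u) * indicator {0<..<1} u \<partial>lborel)"
proof -
  interpret cdf_distribution M ..
  have Q_eq_I: "Q u = I u" if "u \<in> {0<..<1}" for u
    using Q_le_iff[OF that] pseudoinverse[of u] that by (metis order.refl order.antisym greaterThanLessThan_iff)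
  have "(\<integral>x. g x \<partial>M) = (\<integral>x. g x \<partial>distr (restrict_space lborel {0<..<1}) borel I)"
    by (simp add: distr_I_eq_M)
  also have "\<dots> = (\<integral>u. g (I u) \<partial>restrict_space lborel {0<..<1})"
    by (rule integral_distr) (simp_all add: measurable_restrict_space1)
  also have "\<dots> = (\<integral>u. indicator {0<..<1} u *\<^sub>R g (I u) \<partial>lborel)"
    by (rule integral_restrict_space) simp
  also have "\<dots> = (\<integral>u. g (Q u) * indicator {0<..<1} u \<partial>lborel)"
    by (rule Bochner_Integration.integral_cong) (auto simp: Q_eq_I indicator_def)
  finally show ?thesis .
qed

lemma mono_on_lower_adjoint:
  fixes Q F :: "'a::order \<Rightarrow> 'a"
  assumes "\<And>u x. u \<in> S \<Longrightarrow> Q u \<le> x \<longleftrightarrow> u \<le> F x"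
  shows "mono_on S Q"
  by (intro mono_onI) (metis assms order.refl order.trans)

lemma sets_mix_out [measurable_cong, simp]: "sets (mix_out qp qm) = sets borel"
  and space_mix_out [simp]: "space (mix_out qp qm) = UNIV"
  unfolding mix_out_def by simp_all

lemma borel_measurable_llr:
  assumes "is_pdf qp" "is_pdf qm"
  shows "llr qp qm \<in> borel_measurable borel"
proof -
  have [measurable]: "qp \<in> borel_measurable borel" "qm \<in> borel_measurable borel"
    using assms by (simp_all add: is_pdf_def)
  show ?thesis
    unfolding llr_def[abs_def] by measurable
qed

lemma prob_space_mix_out:
  assumes qp: "is_pdf qp" and qm: "is_pdf qm"
  shows "prob_space (mix_out qp qm)"
proof
  have [measurable]: "qp \<in> borel_measurable borel" "qm \<in> borel_measurable borel"
    and nonneg: "0 \<le> qp y" "0 \<le> qm y" for y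
    using qp qm by (simp_all add: is_pdf_def)
  have "ennreal ((qp y + qm y) / 2) = ennreal (1/2) * ennreal (qp y) + ennreal (1/2) * ennreal (qm y)" for y
  proof -
    have "ennreal ((qp y + qm y) / 2) = ennreal (1/2 * qp y) + ennreal (1/2 * qm y)"
      using nonneg[of y] by (subst ennreal_plus[symmetric]) (simp_all add: add_divide_distrib)
    then show ?thesis
      using nonneg[of y] by (simp only: ennreal_mult)
  qed
  then have "emeasure (mix_out qp qm) UNIV
      = ennreal (1/2) * (\<integral>\<^sup>+ y. ennreal (qp y) \<partial>lborel) + ennreal (1/2) * (\<integral>\<^sup>+ y. ennreal (qm y) \<partial>lborel)"
    unfolding mix_out_def by (simp add: emeasure_density nn_integral_add nn_integral_cmult)
  also have "\<dots> = ennreal (1/2 + 1/2)"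
    using qp qm unfolding is_pdf_def by (simp only: mult_1_right ennreal_plus)
  finally show "emeasure (mix_out qp qm) (space (mix_out qp qm)) = 1"
    by simp
qed

lemma real_distribution_abs_llr:
  assumes "is_pdf qp" "is_pdf qm"
  shows "real_distribution (distr (mix_out qp qm) borel (\<lambda>y. \<bar>llr qp qm y\<bar>))"
proof -
  have [measurable]: "llr qp qm \<in> borel_measurable borel"
    using borel_measurable_llr[OF assms] .
  show ?thesis
    by (intro prob_space.real_distribution_distr prob_space_mix_out[OF assms]) simp
qed

lemma cdf_abs_llr:
  assumes "is_pdf qp" "is_pdf qm"
  shows "cdf (distr (mix_out qp qm) borel (\<lambda>y. \<bar>llr qp qm y\<bar>)) t = Psi qp qm t"
proof -
  have [measurable]: "llr qp qm \<in> borel_measurable borel"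
    using borel_measurable_llr[OF assms] .
  have "(\<lambda>y. \<bar>llr qp qm y\<bar>) -` {..t} \<inter> space (mix_out qp qm) = {y. \<bar>llr qp qm y\<bar> \<le> t}"
    by auto
  then show ?thesis
    unfolding cdf_def Psi_def by (subst measure_distr) simp_all
qed

lemma Psi_quantile_le_iff:
  assumes pdf: "is_pdf qp" "is_pdf qm"
    and inv1: "\<forall>u\<in>{0<..<1}. Q u > 0 \<and> Psi qp qm (Q u) = u" and inv2: "\<forall>t>0. Q (Psi qp qm t) = t"
    and u: "u \<in> {0<..<1}"
  shows "Q u \<le> t \<longleftrightarrow> u \<le> Psi qp qm t"
  using real_distribution.quantile_le_iff[OF real_distribution_abs_llr[OF pdf], of Q, unfolded cdf_abs_llr[OF pdf]]
    inv1 inv2 u by blast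

lemma integral_abs_llr_eq_quantile:
  fixes g :: "real \<Rightarrow> real"
  assumes pdf: "is_pdf qp" "is_pdf qm"
    and Q_le_iff: "\<And>u t. u \<in> {0<..<1} \<Longrightarrow> Q u \<le> t \<longleftrightarrow> u \<le> Psi qp qm t"
    and g: "g \<in> borel_measurable borel"
  shows "(\<integral>y. g \<bar>llr qp qm y\<bar> \<partial>mix_out qp qm) = (\<integral>u. g (Q u) * indicator {0<..<1} u \<partial>lborel)"
proof -
  have [measurable]: "llr qp qm \<in> borel_measurable borel"
    by (rule borel_measurable_llr[OF pdf])
  have "(\<integral>y. g \<bar>llr qp qm y\<bar> \<partial>mix_out qp qm) = (\<integral>t. g t \<partial>distr (mix_out qp qm) borel (\<lambda>y. \<bar>llr qp qm y\<bar>))"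
    using g by (intro integral_distr[symmetric]) simp_all
  also have "\<dots> = (\<integral>u. g (Q u) * indicator {0<..<1} u \<partial>lborel)"
    using real_distribution.integral_eq_integral_quantile[OF real_distribution_abs_llr[OF pdf]]
      Q_le_iff g by (simp add: cdf_abs_llr[OF pdf])
  finally show ?thesis .
qed

section \<open>Uniform random signs and conditional expectations\<close>

lemma (in prob_space) integral_uniform_sign:
  fixes Z :: "'a \<Rightarrow> real" and f :: "real \<Rightarrow> real"
  assumes Z[measurable]: "Z \<in> borel_measurable M"
    and vals: "\<And>\<omega>. \<omega> \<in> space M \<Longrightarrow> Z \<omega> \<in> {-1, 1}"
    and unif: "prob {\<omega>\<in>space M. Z \<omega> = 1} = 1/2"
  shows "(\<integral>\<omega>. f (Z \<omega>) \<partial>M) = (f 1 + f (-1)) / 2"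
proof -
  define E where "E = {\<omega>\<in>space M. Z \<omega> = 1}"
  have [measurable]: "E \<in> sets M"
    unfolding E_def by measurable
  have "(\<integral>\<omega>. f (Z \<omega>) \<partial>M) = (\<integral>\<omega>. f (-1) + (f 1 - f (-1)) * indicator E \<omega> \<partial>M)"
    using vals by (intro Bochner_Integration.integral_cong) (force simp: E_def indicator_def)+
  also have "\<dots> = f (-1) + (f 1 - f (-1)) * prob E"
  proof -
    have "integrable M (\<lambda>\<omega>. (f 1 - f (-1)) * indicator E \<omega>)"
      by (intro integrable_mult_right integrable_real_indicator) (auto simp: less_top[symmetric])
    then show ?thesis
      by (simp add: Bochner_Integration.integral_add prob_space)
  qed
  finally show ?thesis
    using unif by (simp add: E_def field_simps)
qed

lemma (in prob_space) integral_prod_indep_uniform_signs: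
  fixes Z :: "'i \<Rightarrow> 'a \<Rightarrow> real" and f :: "'i \<Rightarrow> real \<Rightarrow> real"
  assumes I: "finite I" and indep: "indep_vars (\<lambda>_. borel) Z I"
    and vals: "\<And>i \<omega>. i \<in> I \<Longrightarrow> \<omega> \<in> space M \<Longrightarrow> Z i \<omega> \<in> {-1, 1}"
    and unif: "\<And>i. i \<in> I \<Longrightarrow> prob {\<omega>\<in>space M. Z i \<omega> = 1} = 1/2"
  shows "(\<integral>\<omega>. (\<Prod>i\<in>I. f i (Z i \<omega>)) \<partial>M) = (\<Prod>i\<in>I. (f i 1 + f i (-1)) / 2)"
proof -
  define g where "g i x = (if x = 1 then f i 1 else f i (-1))" for i and x :: real
  have Z[measurable]: "Z i \<in> borel_measurable M" if "i \<in> I" for i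
    using indep that by (simp add: indep_vars_def)
  have g_Z: "f i (Z i \<omega>) = g i (Z i \<omega>)" if "i \<in> I" "\<omega> \<in> space M" for i \<omega>
    using vals[OF that] by (auto simp: g_def)
  have "indep_vars (\<lambda>_. borel) (\<lambda>i \<omega>. g i (Z i \<omega>)) I"
    by (rule indep_vars_compose2[OF indep]) (simp add: g_def)
  moreover have "integrable M (\<lambda>\<omega>. g i (Z i \<omega>))" if "i \<in> I" for i
    using that by (intro integrable_const_bound[where B="\<bar>f i 1\<bar> + \<bar>f i (-1)\<bar>"]) (auto simp: g_def)
  ultimately have "(\<integral>\<omega>. (\<Prod>i\<in>I. g i (Z i \<omega>)) \<partial>M) = (\<Prod>i\<in>I. \<integral>\<omega>. g i (Z i \<omega>) \<partial>M)"
    using I by (rule indep_vars_lebesgue_integral[rotated])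
  also have "\<dots> = (\<Prod>i\<in>I. (f i 1 + f i (-1)) / 2)"
  proof (rule prod.cong[OF refl])
    fix i assume i: "i \<in> I"
    have "(\<integral>\<omega>. g i (Z i \<omega>) \<partial>M) = (g i 1 + g i (-1)) / 2"
      using vals[OF i] unif[OF i] Z[OF i] by (intro integral_uniform_sign) auto
    then show "(\<integral>\<omega>. g i (Z i \<omega>) \<partial>M) = (f i 1 + f i (-1)) / 2"
      by (simp add: g_def)
  qed
  finally show ?thesis
    using g_Z by (simp cong: Bochner_Integration.integral_cong prod.cong)
qed

lemma (in prob_space) integral_indep_var_pair:
  fixes H :: "'b \<times> 'b \<Rightarrow> real"
  assumes indep: "indep_var MU U MV V"
    and H[measurable]: "H \<in> borel_measurable (MU \<Otimes>\<^sub>M MV)" and bound: "\<And>z. \<bar>H z\<bar> \<le> B"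
  shows "(\<integral>\<omega>. H (U \<omega>, V \<omega>) \<partial>M) = (\<integral>u. (\<integral>\<omega>. H (u, V \<omega>) \<partial>M) \<partial>distr M MU U)"
proof -
  have [measurable]: "U \<in> M \<rightarrow>\<^sub>M MU" "V \<in> M \<rightarrow>\<^sub>M MV"
    using indep by (auto dest: indep_var_rv1 indep_var_rv2)
  interpret U: prob_space "distr M MU U"
    by (rule prob_space_distr) simp
  interpret V: prob_space "distr M MV V"
    by (rule prob_space_distr) simp
  interpret UV: pair_prob_space "distr M MU U" "distr M MV V" ..
  have "integrable (distr M MU U \<Otimes>\<^sub>M distr M MV V) H"
    using bound by (intro UV.P.integrable_const_bound[where B=B]) auto
  then have fubini: "(\<integral>z. H z \<partial>distr M MU U \<Otimes>\<^sub>M distr M MV V)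
      = (\<integral>u. (\<integral>v. H (u, v) \<partial>distr M MV V) \<partial>distr M MU U)"
    by (rule UV.integral_fst'[symmetric])
  have "(\<integral>\<omega>. H (U \<omega>, V \<omega>) \<partial>M) = (\<integral>z. H z \<partial>distr M (MU \<Otimes>\<^sub>M MV) (\<lambda>\<omega>. (U \<omega>, V \<omega>)))"
    by (simp add: integral_distr)
  also have "\<dots> = (\<integral>u. (\<integral>v. H (u, v) \<partial>distr M MV V) \<partial>distr M MU U)"
    using indep fubini by (simp add: indep_var_distribution_eq)
  also have "\<dots> = (\<integral>u. (\<integral>\<omega>. H (u, V \<omega>) \<partial>M) \<partial>distr M MU U)"
    by (intro Bochner_Integration.integral_cong refl integral_distr) simp_all
  finally show ?thesis .
qed

lemma (in prob_space) real_cond_exp_indep_eq_const: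
  fixes G :: "'b \<times> 'b \<Rightarrow> real"
  assumes indep: "indep_var MU U MV V" and \<tau>[measurable]: "\<tau> \<in> MU \<rightarrow>\<^sub>M MT"
    and G[measurable]: "G \<in> borel_measurable (MU \<Otimes>\<^sub>M MV)" and bound: "\<And>z. \<bar>G z\<bar> \<le> B"
    and const: "\<And>u. u \<in> space MU \<Longrightarrow> (\<integral>\<omega>. G (u, V \<omega>) \<partial>M) = c"
  shows "AE \<omega> in M. real_cond_exp M (vimage_algebra (space M) (\<lambda>\<omega>. \<tau> (U \<omega>)) MT) (\<lambda>\<omega>. G (U \<omega>, V \<omega>)) \<omega> = c"
proof -
  define F where "F = vimage_algebra (space M) (\<lambda>\<omega>. \<tau> (U \<omega>)) MT"
  have [measurable]: "U \<in> M \<rightarrow>\<^sub>M MU" "V \<in> M \<rightarrow>\<^sub>M MV"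
    using indep by (auto dest: indep_var_rv1 indep_var_rv2)
  have \<tau>U: "(\<lambda>\<omega>. \<tau> (U \<omega>)) \<in> M \<rightarrow>\<^sub>M MT"
    by measurable
  then have "subalgebra M F"
    unfolding subalgebra_def F_def by (simp add: measurable_iff_sets)
  then interpret F: finite_measure_subalgebra M F
    by (intro finite_measure_subalgebra.intro finite_measure_subalgebra_axioms.intro finite_measure_axioms)
  have "(\<integral>\<omega>\<in>A. G (U \<omega>, V \<omega>) \<partial>M) = (\<integral>\<omega>\<in>A. c \<partial>M)" if A: "A \<in> sets F" for A
  proof -
    obtain S where S[measurable]: "S \<in> sets MT" and A_eq: "A = (\<lambda>\<omega>. \<tau> (U \<omega>)) -` S \<inter> space M"
      using A unfolding F_def by (subst (asm) sets_vimage_algebra2) (auto intro: measurable_space[OF \<tau>U])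
    define H where "H z = indicator S (\<tau> (fst z)) * G z" for z
    have H_bound: "\<bar>H z\<bar> \<le> B" for z
      using bound[of z] by (cases "\<tau> (fst z) \<in> S") (auto simp: H_def)
    have H_measurable: "H \<in> borel_measurable (MU \<Otimes>\<^sub>M MV)"
      unfolding H_def by measurable
    have "(\<integral>\<omega>\<in>A. G (U \<omega>, V \<omega>) \<partial>M) = (\<integral>\<omega>. H (U \<omega>, V \<omega>) \<partial>M)"
      unfolding set_lebesgue_integral_def A_eq
      by (intro Bochner_Integration.integral_cong) (auto simp: H_def indicator_def)
    also have "\<dots> = (\<integral>u. (\<integral>\<omega>. H (u, V \<omega>) \<partial>M) \<partial>distr M MU U)"
      by (rule integral_indep_var_pair[OF indep H_measurable H_bound])
    also have "\<dots> = (\<integral>u. indicator S (\<tau> u) * c \<partial>distr M MU U)"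
      using const by (intro Bochner_Integration.integral_cong) (simp_all add: H_def)
    also have "\<dots> = (\<integral>\<omega>\<in>A. c \<partial>M)"
      unfolding set_lebesgue_integral_def A_eq
      by (subst integral_distr) (auto intro!: Bochner_Integration.integral_cong simp: indicator_def)
    finally show ?thesis .
  qed
  moreover have "integrable M (\<lambda>\<omega>. G (U \<omega>, V \<omega>))"
    using bound by (intro integrable_const_bound[where B=B]) auto
  ultimately have "AE \<omega> in M. real_cond_exp M F (\<lambda>\<omega>. G (U \<omega>, V \<omega>)) \<omega> = c"
    by (intro F.real_cond_exp_charact) auto
  then show ?thesis
    unfolding F_def .
qed

lemma (in prob_space) integral_exp_orb_metric:
  assumes indep: "indep_vars (\<lambda>_. borel) Z {1..N}"
    and vals: "\<And>i \<omega>. i \<in> {1..N} \<Longrightarrow> \<omega> \<in> space M \<Longrightarrow> Z i \<omega> \<in> {-1, 1}"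
    and unif: "\<And>i. i \<in> {1..N} \<Longrightarrow> prob {\<omega>\<in>space M. Z i \<omega> = 1} = 1/2"
  shows "(\<integral>\<omega>. exp (real N * \<theta> * orb_metric Q N t (\<lambda>i. Z i \<omega>)) \<partial>M) = orb_mgf Q \<theta> N"
proof -
  define a where "a i = \<theta> * Q (real (rank t N i) / real (N + 1))" for i
  define f where "f i z = exp (a i * (if sgnp (t i) * z < 0 then 1 else 0))" for i and z :: real
  have "(\<integral>\<omega>. exp (real N * \<theta> * orb_metric Q N t (\<lambda>i. Z i \<omega>)) \<partial>M)
      = (\<integral>\<omega>. (\<Prod>i\<in>{1..N}. f i (Z i \<omega>)) \<partial>M)"
    unfolding exp_orb_metric f_def a_def ..
  also have "\<dots> = (\<Prod>i\<in>{1..N}. (f i 1 + f i (-1)) / 2)"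
    using indep vals unif by (rule integral_prod_indep_uniform_signs[OF finite_atLeastAtMost])
  also have "\<dots> = (\<Prod>i\<in>{1..N}. (1 + exp (a i)) / 2)"
    by (intro prod.cong refl) (simp add: f_def sgnp_def)
  also have "\<dots> = orb_mgf Q \<theta> N"
    unfolding a_def orb_mgf_def by (rule prod_rank_reindex)
  finally show ?thesis .
qed

section \<open>The random coding model\<close>

lemma borel_measurable_fst_snd [measurable]:
  "(fst :: real \<times> real \<Rightarrow> real) \<in> borel_measurable borel"
  "(snd :: real \<times> real \<Rightarrow> real) \<in> borel_measurable borel"
  by (intro borel_measurable_continuous_onI continuous_on_fst continuous_on_snd continuous_on_id)+

locale random_codebook = prob_space M for M :: "'a measure" +
  fixes X :: "nat \<Rightarrow> nat \<Rightarrow> 'a \<Rightarrow> real" and Y :: "nat \<Rightarrow> 'a \<Rightarrow> real"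
  assumes indep: "indep_vars (\<lambda>_. borel)
      (\<lambda>k \<omega>. case k of Inl i \<Rightarrow> (X 1 i \<omega>, Y i \<omega>) | Inr (w, i) \<Rightarrow> (X w i \<omega>, 0))
      ({Inl i | i. i \<ge> 1} \<union> {Inr (w, i) | w i. w \<ge> 2 \<and> i \<ge> 1})"
    and codeword_sign: "\<And>w i \<omega>. 2 \<le> w \<Longrightarrow> 1 \<le> i \<Longrightarrow> \<omega> \<in> space M \<Longrightarrow> X w i \<omega> \<in> {-1, 1}"
    and codeword_uniform: "\<And>w i. 2 \<le> w \<Longrightarrow> 1 \<le> i \<Longrightarrow> prob {\<omega>\<in>space M. X w i \<omega> = 1} = 1/2"
begin

definition codebook_var :: "nat + nat \<times> nat \<Rightarrow> 'a \<Rightarrow> real \<times> real" where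
  "codebook_var k \<omega> = (case k of Inl i \<Rightarrow> (X 1 i \<omega>, Y i \<omega>) | Inr (w, i) \<Rightarrow> (X w i \<omega>, 0))"

lemma indep_codebook_var:
  "indep_vars (\<lambda>_. borel) codebook_var ({Inl i | i. i \<ge> 1} \<union> {Inr (w, i) | w i. w \<ge> 2 \<and> i \<ge> 1})"
  using indep unfolding codebook_var_def[abs_def] .

lemma indep_vars_codeword:
  assumes w: "2 \<le> w"
  shows "indep_vars (\<lambda>_. borel) (\<lambda>i. X w i) {1..N}"
proof -
  have "indep_vars (\<lambda>j. PiM {Inr (w, j)} (\<lambda>_. borel)) (\<lambda>j \<omega>. restrict (\<lambda>k. codebook_var k \<omega>) {Inr (w, j)}) {1..N}"
    using w by (intro indep_vars_restrict[OF indep_codebook_var]) (auto simp: disjoint_family_on_def)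
  then have "indep_vars (\<lambda>_. borel) (\<lambda>j \<omega>. fst (restrict (\<lambda>k. codebook_var k \<omega>) {Inr (w, j)} (Inr (w, j)))) {1..N}"
    by (rule indep_vars_compose2) measurable
  then show ?thesis
    by (simp add: codebook_var_def)
qed

lemma indep_var_outputs_codeword:
  assumes w: "2 \<le> w"
  shows "indep_var (PiM {1..N} (\<lambda>_. borel)) (\<lambda>\<omega>. \<lambda>i\<in>{1..N}. Y i \<omega>)
                   (PiM {1..N} (\<lambda>_. borel)) (\<lambda>\<omega>. \<lambda>i\<in>{1..N}. X w i \<omega>)"
proof -
  define out where "out f = (\<lambda>i\<in>{1..N}. snd (f (Inl i)))" for f :: "nat + nat \<times> nat \<Rightarrow> real \<times> real"
  define cw where "cw f = (\<lambda>i\<in>{1..N}. fst (f (Inr (w, i))))" for f :: "nat + nat \<times> nat \<Rightarrow> real \<times> real"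
  have "indep_var (PiM (Inl ` {1..N}) (\<lambda>_. borel)) (\<lambda>\<omega>. restrict (\<lambda>k. codebook_var k \<omega>) (Inl ` {1..N}))
      (PiM ((\<lambda>i. Inr (w, i)) ` {1..N}) (\<lambda>_. borel)) (\<lambda>\<omega>. restrict (\<lambda>k. codebook_var k \<omega>) ((\<lambda>i. Inr (w, i)) ` {1..N}))"
    using w by (intro indep_var_restrict[OF indep_codebook_var]) auto
  then have "indep_var (PiM {1..N} (\<lambda>_. borel)) (out \<circ> (\<lambda>\<omega>. restrict (\<lambda>k. codebook_var k \<omega>) (Inl ` {1..N})))
      (PiM {1..N} (\<lambda>_. borel)) (cw \<circ> (\<lambda>\<omega>. restrict (\<lambda>k. codebook_var k \<omega>) ((\<lambda>i. Inr (w, i)) ` {1..N})))"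
    unfolding out_def cw_def by (rule indep_var_compose) measurable
  then show ?thesis
    by (simp add: comp_def out_def cw_def codebook_var_def cong: restrict_cong)
qed

lemma real_cond_exp_exp_orb_metric:
  assumes \<tau>[measurable]: "\<tau> \<in> borel_measurable borel" and w: "2 \<le> w"
  shows "AE \<omega> in M. real_cond_exp M (gen_sigma M (\<lambda>i \<omega>. \<tau> (Y i \<omega>)) N)
      (\<lambda>\<omega>. exp (real N * \<theta> * orb_metric Q N (\<lambda>i. \<tau> (Y i \<omega>)) (\<lambda>i. X w i \<omega>))) \<omega> = orb_mgf Q \<theta> N"
proof -
  let ?B = "PiM {1..N} (\<lambda>_. borel) :: (nat \<Rightarrow> real) measure"
  define T where "T y = (\<lambda>i\<in>{1..N}. \<tau> (y i))" for y :: "nat \<Rightarrow> real"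
  define G where "G z = exp (real N * \<theta> * orb_metric Q N (\<lambda>i. \<tau> (fst z i)) (snd z))"
    for z :: "(nat \<Rightarrow> real) \<times> (nat \<Rightarrow> real)"
  have G_eq: "G (y', x') = exp (real N * \<theta> * orb_metric Q N (\<lambda>i. \<tau> (y i)) x)"
    if "\<And>i. i \<in> {1..N} \<Longrightarrow> y' i = y i" "\<And>i. i \<in> {1..N} \<Longrightarrow> x' i = x i" for y y' x x'
    unfolding G_def fst_conv snd_conv using that
    by (intro arg_cong[where f="\<lambda>m. exp (real N * \<theta> * m)"] orb_metric_cong) auto
  have T: "T \<in> ?B \<rightarrow>\<^sub>M ?B"
    unfolding T_def by measurable
  have G: "G \<in> borel_measurable (?B \<Otimes>\<^sub>M ?B)"
  proof -
    have [measurable]: "(\<lambda>z. orb_metric Q N (\<lambda>i. \<tau> (fst z i)) (snd z)) \<in> borel_measurable (?B \<Otimes>\<^sub>M ?B)"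
      by (rule measurable_orb_metric) measurable
    show ?thesis
      unfolding G_def by measurable
  qed
  have const: "(\<integral>\<omega>. G (y, \<lambda>i\<in>{1..N}. X w i \<omega>) \<partial>M) = orb_mgf Q \<theta> N" for y
  proof -
    have "(\<integral>\<omega>. G (y, \<lambda>i\<in>{1..N}. X w i \<omega>) \<partial>M)
        = (\<integral>\<omega>. exp (real N * \<theta> * orb_metric Q N (\<lambda>i. \<tau> (y i)) (\<lambda>i. X w i \<omega>)) \<partial>M)"
      using G_eq[of y y] by simp
    also have "\<dots> = orb_mgf Q \<theta> N"
      using w codeword_sign codeword_uniform by (intro integral_exp_orb_metric indep_vars_codeword) auto
    finally show ?thesis .
  qed
  have "\<bar>G z\<bar> \<le> 2 ^ N * orb_mgf Q \<theta> N" for z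
    unfolding G_def using exp_orb_metric_le by simp
  from real_cond_exp_indep_eq_const[OF indep_var_outputs_codeword[OF w] T G this const]
  have "AE \<omega> in M. real_cond_exp M (vimage_algebra (space M) (\<lambda>\<omega>. T (\<lambda>i\<in>{1..N}. Y i \<omega>)) ?B)
      (\<lambda>\<omega>. G (\<lambda>i\<in>{1..N}. Y i \<omega>, \<lambda>i\<in>{1..N}. X w i \<omega>)) \<omega> = orb_mgf Q \<theta> N" .
  moreover have "(\<lambda>\<omega>. T (\<lambda>i\<in>{1..N}. Y i \<omega>)) = (\<lambda>\<omega>. \<lambda>i\<in>{1..N}. \<tau> (Y i \<omega>))"
    unfolding T_def by (intro ext restrict_cong) auto
  moreover have "(\<lambda>\<omega>. G (\<lambda>i\<in>{1..N}. Y i \<omega>, \<lambda>i\<in>{1..N}. X w i \<omega>))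
      = (\<lambda>\<omega>. exp (real N * \<theta> * orb_metric Q N (\<lambda>i. \<tau> (Y i \<omega>)) (\<lambda>i. X w i \<omega>)))"
    using G_eq by auto
  ultimately show ?thesis
    unfolding gen_sigma_def by simp
qed

end

lemma thrice_differentiable_on_imp_continuous_on:
  "thrice_differentiable_on f S \<Longrightarrow> continuous_on S f"
  unfolding thrice_differentiable_on_def
  by (blast intro: continuous_at_imp_continuous_on DERIV_isCont)

theorem lemma3:
  fixes qp qm :: "real \<Rightarrow> real" and Psiinv :: "real \<Rightarrow> real"
    and M :: "'a measure" and X :: "nat \<Rightarrow> nat \<Rightarrow> 'a \<Rightarrow> real" and Y :: "nat \<Rightarrow> 'a \<Rightarrow> real"
    and R \<theta> :: real and w' :: nat
  assumes pdf: "is_pdf qp" "is_pdf qm"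
    and llr_defined: "AE y in lborel. qp y = 0 \<longleftrightarrow> qm y = 0"
    and A1: "\<exists>M1 a S1. M1 > 0 \<and> a > 0 \<and> (\<forall>y. \<bar>y\<bar> > M1 \<longrightarrow>
               qp y < poly S1 \<bar>y\<bar> * exp (- a * \<bar>y\<bar>) \<and> qm y < poly S1 \<bar>y\<bar> * exp (- a * \<bar>y\<bar>))"
    and A2: "\<exists>M2 S2. M2 > 0 \<and> (\<forall>y. \<bar>y\<bar> > M2 \<longrightarrow> \<bar>ln (qp y / qm y)\<bar> < poly S2 \<bar>y\<bar>)"
    and A3_inv1: "\<forall>u\<in>{0<..<1}. Psiinv u > 0 \<and> Psi qp qm (Psiinv u) = u"
    and A3_inv2: "\<forall>t>0. Psiinv (Psi qp qm t) = t"
    and A3_Psi_smooth: "thrice_differentiable_on (Psi qp qm) {0<..}"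
    and A3_Psiinv_smooth: "thrice_differentiable_on Psiinv {0<..<1}"
    and M: "prob_space M"
    \<comment> \<open>codeword entries X w i (w >= 1 codeword index, i >= 1 position) and outputs Y i;
        the pairs (X 1 i, Y i) and the entries X w i, w >= 2, are mutually independent\<close>
    and indep: "prob_space.indep_vars M (\<lambda>_. borel)
          (\<lambda>k \<omega>. case k of Inl i \<Rightarrow> (X 1 i \<omega>, Y i \<omega>) | Inr (w, i) \<Rightarrow> (X w i \<omega>, 0))
          ({Inl i | i. i \<ge> 1} \<union> {Inr (w, i) | w i. w \<ge> 2 \<and> i \<ge> 1})"
    and X_vals: "\<forall>w\<ge>1. \<forall>i\<ge>1. \<forall>\<omega>\<in>space M. X w i \<omega> \<in> {-1, 1}"
    and X_unif: "\<forall>w\<ge>2. \<forall>i\<ge>1. measure M {\<omega>\<in>space M. X w i \<omega> = 1} = 1/2"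
    and channel_p: "\<forall>i\<ge>1. \<forall>A\<in>sets borel.
          measure M {\<omega>\<in>space M. X 1 i \<omega> = 1 \<and> Y i \<omega> \<in> A} = 1/2 * measure (density lborel (\<lambda>y. ennreal (qp y))) A"
    and channel_m: "\<forall>i\<ge>1. \<forall>A\<in>sets borel.
          measure M {\<omega>\<in>space M. X 1 i \<omega> = -1 \<and> Y i \<omega> \<in> A} = 1/2 * measure (density lborel (\<lambda>y. ennreal (qm y))) A"
    and R: "R > 0"
    and w': "w' \<noteq> 1" "w' \<ge> 1"
    and theta: "\<theta> < 0"
  shows "AE \<omega> in M.
     ((\<lambda>N. ln (real_cond_exp M (gen_sigma M (\<lambda>i \<omega>. llr qp qm (Y i \<omega>)) N)
                 (\<lambda>\<omega>. exp (real N * \<theta> * orb_metric Psiinv N (\<lambda>i. llr qp qm (Y i \<omega>)) (\<lambda>i. X w' i \<omega>))) \<omega>)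
             / real N)
      \<longlonglongrightarrow> (\<integral>y. ln (1 + exp (\<theta> * \<bar>ln (qp y / qm y)\<bar>)) \<partial>mix_out qp qm) - ln 2)"
proof -
  interpret random_codebook M X Y
    using M indep X_vals X_unif by (intro random_codebook.intro random_codebook_axioms.intro) auto
  have Psiinv_le_iff: "\<And>u t. u \<in> {0<..<1} \<Longrightarrow> Psiinv u \<le> t \<longleftrightarrow> u \<le> Psi qp qm t"
    using Psi_quantile_le_iff[OF pdf A3_inv1 A3_inv2] .
  have "AE \<omega> in M. \<forall>N. real_cond_exp M (gen_sigma M (\<lambda>i \<omega>. llr qp qm (Y i \<omega>)) N)
      (\<lambda>\<omega>. exp (real N * \<theta> * orb_metric Psiinv N (\<lambda>i. llr qp qm (Y i \<omega>)) (\<lambda>i. X w' i \<omega>))) \<omega>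
      = orb_mgf Psiinv \<theta> N"
    using real_cond_exp_exp_orb_metric[OF borel_measurable_llr[OF pdf]] w' by (simp add: AE_all_countable)
  moreover have "(\<lambda>N. ln (orb_mgf Psiinv \<theta> N) / real N)
      \<longlonglongrightarrow> (\<integral>u. ln (1 + exp (\<theta> * Psiinv u)) * indicator {0<..<1} u \<partial>lborel) - ln 2"
    using A3_inv1 mono_on_lower_adjoint[where S="{0<..<1}", OF Psiinv_le_iff]
      thrice_differentiable_on_imp_continuous_on[OF A3_Psiinv_smooth]
    by (intro tendsto_ln_orb_mgf theta) auto
  moreover have "(\<integral>u. ln (1 + exp (\<theta> * Psiinv u)) * indicator {0<..<1} u \<partial>lborel)
      = (\<integral>y. ln (1 + exp (\<theta> * \<bar>ln (qp y / qm y)\<bar>)) \<partial>mix_out qp qm)"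
    using integral_abs_llr_eq_quantile[OF pdf Psiinv_le_iff, of "\<lambda>t. ln (1 + exp (\<theta> * t))"]
    by (simp add: llr_def borel_measurable_continuous_onI continuous_intros)
  ultimately show ?thesis
    by (auto elim: eventually_mono)
qed

end
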